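(* Fix a notion of independence for which $N.X$ is defined for all random variables $X$ and all integers $N\ge 0$ (as in the context). Suppose $\{K_n\}_{n\ge1}$ is a family of generalized cumulants for this notion of independence, i.e. it satisfies (K1'), (K2) and (K3). Then for every $X$ and every $n\ge1$, $M_n(N.X)$ (as a function of $N\in\{0,1,2,\dots\}$) is given by a polynomial in $N$, and $K_n(X)$ equals the coefficient of $N$ in this polynomial. In particular, if $\{K_n\}$ and $\{K_n'\}$ are two families satisfying (K1'), (K2), (K3), then $K_n(X)=K_n'(X)$ for all $n$ and all $X$.
   Context: An algebraic probability space is a pair $(\mathcal{A},\varphi)$ with $\mathcal{A}$ a unital $*$-algebra over $\mathbb{C}$ and $\varphi$ a state ($\varphi$ linear, $\varphi(a^*a)\ge0$, $\varphi(1)=1$). For $X\in\mathcal{A}$ write $M_n(X)=\varphi(X^n)$. Fix a notion of independence of random variables (for example commutative, free, Boolean, or monotone independence, the latter with respect to the order of the variables). For an integer $N\ge1$, $N.X$ denotes $X^{(1)}+\cdots+X^{(N)}$, where $X^{(1)},\dots,X^{(N)}$ are independent (in the fixed sense, and in this order) random variables in some algebraic probability space, each identically distributed to $X$ in the sense of moments ($M_n(X^{(i)})=M_n(X)$ for all $n$); it is assumed that the moments of $N.X$ depend only on the moments of $X$. By convention $M_n(0.X)=\delta_{n0}$ and $K_n(0.X):=\delta_{n0}$. A family $\{K_n\}_{n\ge1}$ assigns to each random variable $X$ (in any algebraic probability space) numbers $K_n(X)$ depending only on the moments of $X$, and satisfies: (K1') $K_n(N.X)=N\,K_n(X)$ for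 all $n\ge1$ and all integers $N\ge 0$; (K2) $K_n(\lambda X)=\lambda^nK_n(X)$ for all $\lambda>0$ and $n\ge1$; (K3) for each $n$ there is a polynomial $Q_n$ in $n-1$ variables, independent of $X$, with $M_n(X)=K_n(X)+Q_n(K_1(X),\dots,K_{n-1}(X))$ for all $X$. *)

theory Defs
  imports Complex_Main "HOL-Computational_Algebra.Polynomial"
begin

text \<open>The type 'r stands for (a universe of) random variables.
  M X n is the n-th moment M_n(X) = phi(X^n); sc l X is the dilation l X (l > 0);
  dot N X is N.X, the sum of N independent (in the fixed sense) copies of X.\<close>

definition indep_structure ::
  "('r \<Rightarrow> nat \<Rightarrow> complex) \<Rightarrow> (real \<Rightarrow> 'r \<Rightarrow> 'r) \<Rightarrow> (nat \<Rightarrow> 'r \<Rightarrow> 'r) \<Rightarrow> bool" where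
  "indep_structure M sc dot \<longleftrightarrow>
     (\<forall>X. M X 0 = 1) \<and>
     (\<forall>l X n. l > 0 \<longrightarrow> M (sc l X) n = (complex_of_real l) ^ n * M X n) \<and>
     (\<forall>X n. M (dot 0 X) n = (if n = 0 then 1 else 0)) \<and>
     (\<forall>X. M (dot 1 X) = M X) \<and>
     (\<forall>N X Y. M X = M Y \<longrightarrow> M (dot N X) = M (dot N Y))"

definition poly_in_vars :: "nat \<Rightarrow> ((nat \<Rightarrow> complex) \<Rightarrow> complex) \<Rightarrow> bool" where
  "poly_in_vars n Q \<longleftrightarrow>
     (\<exists>S :: (nat \<Rightarrow> nat) set. \<exists>c :: (nat \<Rightarrow> nat) \<Rightarrow> complex. finite S \<and>
        (\<forall>k. Q k = (\<Sum>\<alpha>\<in>S. c \<alpha> * (\<Prod>j\<in>{1..<n}. k j ^ \<alpha> j))))"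

definition gen_cumulants ::
  "('r \<Rightarrow> nat \<Rightarrow> complex) \<Rightarrow> (real \<Rightarrow> 'r \<Rightarrow> 'r) \<Rightarrow> (nat \<Rightarrow> 'r \<Rightarrow> 'r)
     \<Rightarrow> (nat \<Rightarrow> 'r \<Rightarrow> complex) \<Rightarrow> bool" where
  "gen_cumulants M sc dot K \<longleftrightarrow>
     (\<forall>X Y n. M X = M Y \<longrightarrow> n \<ge> 1 \<longrightarrow> K n X = K n Y) \<and>
     (\<forall>n N X. n \<ge> 1 \<longrightarrow> K n (dot N X) = of_nat N * K n X) \<and>
     (\<forall>l n X. l > 0 \<longrightarrow> n \<ge> 1 \<longrightarrow> K n (sc l X) = (complex_of_real l) ^ n * K n X) \<and>
     (\<forall>n \<ge> 1. \<exists>Q. poly_in_vars n Q \<and> (\<forall>X. M X n = K n X + Q (\<lambda>j. K j X)))"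

end

theory Submission
  imports Defs
begin

text \<open>
  By (K3) there is a polynomial Q in n-1 variables with
  M_n(Y) = K_n(Y) + Q(K_1(Y), ..., K_(n-1)(Y)).  Taking Y = N.X and using (K1'),
  M_n(N.X) = N K_n(X) + Q(N k_1, ..., N k_(n-1)) with k_j = K_j(X); expanding Q into
  monomials shows that this is a polynomial in N.  It remains to see that the
  second summand has no linear term in N.  Taking Y = r (N.X) and using the
  dilation laws for moments and (K2) shows the weighted homogeneity
  Q(r N k_1, ..., r^(n-1) N k_(n-1)) = r^n Q(N k_1, ..., N k_(n-1)).
  The linear part in N of the left side is a polynomial in r whose monomials
  r^j all have j < n (they come from single variables k_j), whereas the right side
  is r^n times the linear part of Q(N k); comparing the coefficients of r^n shows
  that the linear part vanishes.  Uniqueness of the cumulants follows because a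
  polynomial is determined by its values at the natural numbers.
\<close>

lemma poly_eq_on_positive_naturals:
  fixes p q :: "'a :: {idom, ring_char_0} poly"
  assumes "\<And>m. poly p (of_nat (Suc m)) = poly q (of_nat (Suc m))"
  shows "p = q"
proof (rule ccontr)
  assume "p \<noteq> q"
  then have "finite {x. poly (p - q) x = 0}" by (intro poly_roots_finite) simp
  moreover have "range (\<lambda>m. of_nat (Suc m) :: 'a) \<subseteq> {x. poly (p - q) x = 0}"
    using assms by auto
  ultimately have "finite (range (\<lambda>m. of_nat (Suc m) :: 'a))" by (rule finite_subset[rotated])
  moreover have "inj (\<lambda>m. of_nat (Suc m) :: 'a)" by (auto simp: inj_def)
  ultimately show False using finite_imageD by fastforce
qed

lemma poly_in_vars_cong:
  assumes "poly_in_vars n Q" and "\<And>j. j \<in> {1..<n} \<Longrightarrow> k j = k' j"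
  shows "Q k = Q k'"
  using assms unfolding poly_in_vars_def by (auto intro!: sum.cong prod.cong)

definition monomial_degree :: "nat \<Rightarrow> (nat \<Rightarrow> nat) \<Rightarrow> nat" where
  "monomial_degree n \<alpha> = (\<Sum>j\<in>{1..<n}. \<alpha> j)"

definition monomial_weight :: "nat \<Rightarrow> (nat \<Rightarrow> nat) \<Rightarrow> nat" where
  "monomial_weight n \<alpha> = (\<Sum>j\<in>{1..<n}. j * \<alpha> j)"

text \<open>A monomial of degree one is a single variable k_j with j < n, so its weight
  is below n.  This is what separates the linear term from the weight-n part.\<close>
lemma monomial_weight_less_of_degree_one:
  assumes "monomial_degree n \<alpha> = 1"
  shows "monomial_weight n \<alpha> < n"
proof -
  have "n \<noteq> 0"
    using assms by (cases "n = 0") (auto simp: monomial_degree_def)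
  have "monomial_weight n \<alpha> \<le> (\<Sum>j\<in>{1..<n}. (n - 1) * \<alpha> j)"
    unfolding monomial_weight_def by (intro sum_mono) auto
  also have "\<dots> = (n - 1) * monomial_degree n \<alpha>"
    by (simp add: monomial_degree_def sum_distrib_left)
  finally show ?thesis using assms \<open>n \<noteq> 0\<close> by simp
qed

lemma monomial_scaled:
  fixes s t :: "'a :: comm_semiring_1"
  shows "(\<Prod>j\<in>{1..<n}. (s ^ j * (t * k j)) ^ \<alpha> j)
       = s ^ monomial_weight n \<alpha> * t ^ monomial_degree n \<alpha> * (\<Prod>j\<in>{1..<n}. k j ^ \<alpha> j)"
  by (simp add: monomial_weight_def monomial_degree_def power_mult_distrib prod.distrib
      power_sum power_mult mult_ac)

lemma poly_in_vars_along_scaled_ray: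
  assumes "poly_in_vars n Q"
  obtains S and a :: "(nat \<Rightarrow> nat) \<Rightarrow> complex" where
    "\<And>s t. Q (\<lambda>j. s ^ j * (t * k j))
       = poly (\<Sum>\<alpha>\<in>S. monom (a \<alpha> * s ^ monomial_weight n \<alpha>) (monomial_degree n \<alpha>)) t"
proof -
  obtain S and c :: "(nat \<Rightarrow> nat) \<Rightarrow> complex"
    where Q: "\<And>k. Q k = (\<Sum>\<alpha>\<in>S. c \<alpha> * (\<Prod>j\<in>{1..<n}. k j ^ \<alpha> j))"
    using assms unfolding poly_in_vars_def by blast
  define a where "a \<alpha> = c \<alpha> * (\<Prod>j\<in>{1..<n}. k j ^ \<alpha> j)" for \<alpha>
  have "Q (\<lambda>j. s ^ j * (t * k j))
       = poly (\<Sum>\<alpha>\<in>S. monom (a \<alpha> * s ^ monomial_weight n \<alpha>) (monomial_degree n \<alpha>)) t"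
    for s t unfolding Q monomial_scaled by (simp add: a_def poly_sum poly_monom mult_ac)
  then show ?thesis by (rule that)
qed

lemma weighted_homogeneous_no_linear_term:
  fixes Q :: "(nat \<Rightarrow> complex) \<Rightarrow> complex"
  assumes Q: "poly_in_vars n Q"
    and hom: "\<And>s N. Q (\<lambda>j. of_nat (Suc s) ^ j * (of_nat N * k j))
                   = of_nat (Suc s) ^ n * Q (\<lambda>j. of_nat N * k j)"
  shows "\<exists>p. (\<forall>N. Q (\<lambda>j. of_nat N * k j) = poly p (of_nat N)) \<and> coeff p 1 = 0"
proof -
  obtain S a where ray: "\<And>s t. Q (\<lambda>j. s ^ j * (t * k j))
       = poly (\<Sum>\<alpha>\<in>S. monom (a \<alpha> * s ^ monomial_weight n \<alpha>) (monomial_degree n \<alpha>)) t"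
    using poly_in_vars_along_scaled_ray[OF Q, of k] by metis
  define D where "D s = (\<Sum>\<alpha>\<in>S. monom (a \<alpha> * s ^ monomial_weight n \<alpha>) (monomial_degree n \<alpha>))"
    for s
  have ray1: "Q (\<lambda>j. t * k j) = poly (D 1) t" for t
    using ray[of 1 t] by (simp add: D_def)
  have D_hom: "D (of_nat (Suc s)) = smult (of_nat (Suc s) ^ n) (D 1)" for s
  proof (rule poly_eq_on_positive_naturals)
    fix m
    have "poly (D (of_nat (Suc s))) (of_nat (Suc m))
        = Q (\<lambda>j. of_nat (Suc s) ^ j * (of_nat (Suc m) * k j))"
      by (simp only: ray D_def)
    also have "\<dots> = of_nat (Suc s) ^ n * Q (\<lambda>j. of_nat (Suc m) * k j)"
      by (rule hom)
    finally show "poly (D (of_nat (Suc s))) (of_nat (Suc m))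
        = poly (smult (of_nat (Suc s) ^ n) (D 1)) (of_nat (Suc m))"
      by (simp only: ray1 poly_smult)
  qed
  define R where
    "R = (\<Sum>\<alpha>\<in>S. monom (if monomial_degree n \<alpha> = 1 then a \<alpha> else 0) (monomial_weight n \<alpha>))"
  have R_coeff: "poly R s = coeff (D s) 1" for s
    unfolding R_def D_def
    by (simp add: poly_sum poly_monom coeff_sum coeff_monom) (auto intro!: sum.cong)
  have "R = monom (coeff (D 1) 1) n"
  proof (rule poly_eq_on_positive_naturals)
    fix s show "poly R (of_nat (Suc s)) = poly (monom (coeff (D 1) 1) n) (of_nat (Suc s))"
      unfolding R_coeff D_hom by (simp add: poly_monom mult_ac)
  qed
  then have "coeff (D 1) 1 = coeff R n" by simp
  also have "\<dots> = 0"
    unfolding R_def coeff_sum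
  proof (intro sum.neutral ballI)
    fix \<alpha>
    show "coeff (monom (if monomial_degree n \<alpha> = 1 then a \<alpha> else 0) (monomial_weight n \<alpha>)) n = 0"
      using monomial_weight_less_of_degree_one[of n \<alpha>] by (auto simp: coeff_monom)
  qed
  finally show ?thesis using ray1 by blast
qed

lemma moments_of_dot_polynomial:
  fixes M :: "'r \<Rightarrow> nat \<Rightarrow> complex" and sc :: "real \<Rightarrow> 'r \<Rightarrow> 'r"
    and dot :: "nat \<Rightarrow> 'r \<Rightarrow> 'r" and K :: "nat \<Rightarrow> 'r \<Rightarrow> complex"
  assumes I: "indep_structure M sc dot" and G: "gen_cumulants M sc dot K" and "n \<ge> 1"
  shows "\<exists>p :: complex poly. (\<forall>N. M (dot N X) n = poly p (of_nat N)) \<and> coeff p 1 = K n X"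
proof -
  have M_sc: "\<And>l Y m. l > 0 \<Longrightarrow> M (sc l Y) m = complex_of_real l ^ m * M Y m"
    using I unfolding indep_structure_def by blast
  have K_dot: "\<And>m N Y. m \<ge> 1 \<Longrightarrow> K m (dot N Y) = of_nat N * K m Y"
    and K_sc: "\<And>l m Y. l > 0 \<Longrightarrow> m \<ge> 1 \<Longrightarrow> K m (sc l Y) = complex_of_real l ^ m * K m Y"
    using G unfolding gen_cumulants_def by blast+
  obtain Q where Q: "poly_in_vars n Q" and M_Q: "\<And>Y. M Y n = K n Y + Q (\<lambda>j. K j Y)"
    using G \<open>n \<ge> 1\<close> unfolding gen_cumulants_def by blast
  have Q_dot: "Q (\<lambda>j. K j (dot N X)) = Q (\<lambda>j. of_nat N * K j X)" for N
    by (rule poly_in_vars_cong[OF Q]) (simp add: K_dot)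
  have Q_sc_dot: "Q (\<lambda>j. K j (sc r (dot N X))) = Q (\<lambda>j. complex_of_real r ^ j * (of_nat N * K j X))"
    if "r > 0" for r N
    by (rule poly_in_vars_cong[OF Q]) (simp add: K_dot K_sc that)
  text \<open>Weighted homogeneity of Q, read off from the dilation laws of M_n and K_n.\<close>
  have hom: "Q (\<lambda>j. of_nat (Suc s) ^ j * (of_nat N * K j X))
           = of_nat (Suc s) ^ n * Q (\<lambda>j. of_nat N * K j X)" for s N
  proof -
    define r where "r = real (Suc s)"
    have "r > 0" by (simp add: r_def)
    have "Q (\<lambda>j. K j (sc r (dot N X))) = M (sc r (dot N X)) n - K n (sc r (dot N X))"
      by (simp add: M_Q)
    also have "\<dots> = complex_of_real r ^ n * (M (dot N X) n - K n (dot N X))"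
      by (simp add: M_sc[OF \<open>r > 0\<close>] K_sc[OF \<open>r > 0\<close> \<open>n \<ge> 1\<close>] right_diff_distrib)
    also have "\<dots> = complex_of_real r ^ n * Q (\<lambda>j. K j (dot N X))"
      by (simp add: M_Q)
    finally show ?thesis
      using Q_sc_dot[OF \<open>r > 0\<close>] by (simp add: Q_dot r_def)
  qed
  obtain p where p: "\<And>N. Q (\<lambda>j. of_nat N * K j X) = poly p (of_nat N)" and "coeff p 1 = 0"
    using weighted_homogeneous_no_linear_term[OF Q hom] by blast
  have "M (dot N X) n = poly (monom (K n X) 1 + p) (of_nat N)" for N
    by (simp add: M_Q Q_dot p K_dot[OF \<open>n \<ge> 1\<close>] poly_monom mult_ac)
  moreover have "coeff (monom (K n X) 1 + p) 1 = K n X"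
    using \<open>coeff p 1 = 0\<close> by simp
  ultimately show ?thesis by blast
qed

theorem mainTheorem1:
  fixes M :: "'r \<Rightarrow> nat \<Rightarrow> complex" and sc :: "real \<Rightarrow> 'r \<Rightarrow> 'r"
    and dot :: "nat \<Rightarrow> 'r \<Rightarrow> 'r" and K :: "nat \<Rightarrow> 'r \<Rightarrow> complex"
  assumes "indep_structure M sc dot"
    and "gen_cumulants M sc dot K"
  shows "(\<forall>X n. n \<ge> 1 \<longrightarrow>
            (\<exists>p :: complex poly. (\<forall>N. M (dot N X) n = poly p (of_nat N)) \<and> coeff p 1 = K n X))
       \<and> (\<forall>K'. gen_cumulants M sc dot K' \<longrightarrow> (\<forall>n X. n \<ge> 1 \<longrightarrow> K n X = K' n X))"
proof (intro conjI allI impI)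
  fix X n assume "(n::nat) \<ge> 1"
  then show "\<exists>p :: complex poly. (\<forall>N. M (dot N X) n = poly p (of_nat N)) \<and> coeff p 1 = K n X"
    using moments_of_dot_polynomial[OF assms] by blast
next
  fix K' n X assume G': "gen_cumulants M sc dot K'" and "(n::nat) \<ge> 1"
  obtain p where p: "\<forall>N. M (dot N X) n = poly p (of_nat N)" "coeff p 1 = K n X"
    using moments_of_dot_polynomial[OF assms \<open>n \<ge> 1\<close>] by blast
  obtain p' where p': "\<forall>N. M (dot N X) n = poly p' (of_nat N)" "coeff p' 1 = K' n X"
    using moments_of_dot_polynomial[OF assms(1) G' \<open>n \<ge> 1\<close>] by blast
  have "p = p'"
    by (rule poly_eq_on_positive_naturals) (use p(1) p'(1) in metis)
  then show "K n X = K' n X" using p(2) p'(2) by simp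
qed

end
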